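(* Let $(b_n)_{n\ge0}$ be the unique positive solution of the discrete Painlevé I equation $\frac{n}{b_n}=b_{n-1}+b_n+b_{n+1}-\kappa$ for $n\ge1$, with $b_0=0$. For all $c^-<1$ and $c^+>1$ there exists $N\in\mathbb{N}$ such that, for all $n\ge N$, $$c^-\frac{\sqrt n}{\sqrt3}\le b_n\le c^+\frac{\sqrt n}{\sqrt3}.$$ In particular, if $\kappa=4$, $c^-=0.987$ and $c^+=1.025$, this holds with $N=2187$.
   Context: Here $\kappa\in\mathbb{R}$ is fixed. Equivalently, $b_n=a_n^2$, where $(a_n)$ are the coefficients of the three-term recurrence $xp_n=a_{n+1}p_{n+1}+a_np_{n-1}$ (with $a_0=0$ and $a_n>0$) of the orthonormal polynomials $p_n$ with respect to $\nu(dx)\propto e^{-x^4/4+\kappa x^2/2}dx$. *)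

theory Defs
  imports Complex_Main
begin

definition dPI_pos_solution :: "real \<Rightarrow> (nat \<Rightarrow> real) \<Rightarrow> bool" where
  "dPI_pos_solution \<kappa> b \<longleftrightarrow> b 0 = 0 \<and> (\<forall>n\<ge>1. b n > 0) \<and>
     (\<forall>n\<ge>1. real n / b n = b (n - 1) + b n + b (n + 1) - \<kappa>)"

end

theory Submission
  imports Defs "HOL-Real_Asymp.Real_Asymp"
begin

text \<open>Let \<open>f\<^sub>n\<close> be the positive root of \<open>n = f (3 f - \<kappa>)\<close>, so that \<open>f\<^sub>n \<sim> \<surd>(n/3)\<close> and
  \<open>n \<mapsto> f\<^sub>n\<close> is increasing and concave. The equation reads \<open>b\<^sub>n\<^sub>-\<^sub>1 + b\<^sub>n\<^sub>+\<^sub>1 = n/b\<^sub>n - b\<^sub>n + \<kappa>\<close>,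
  and the right-hand side is decreasing in \<open>b\<^sub>n\<close>. Hence if eventually \<open>b \<le> U f\<close>, then eventually
  \<open>b \<ge> T f\<close> whenever \<open>T\<^sup>2 + 2 U T < 3\<close>, and symmetrically an eventual lower bound \<open>L f\<close>
  gives an eventual upper bound \<open>T f\<close> whenever \<open>T\<^sup>2 + 2 L T > 3\<close>. The optimal constants
  \<open>l \<le> u\<close> therefore satisfy \<open>u\<^sup>2 + 2 l u \<le> 3 \<le> l\<^sup>2 + 2 l u\<close>, which forces \<open>l = u = 1\<close>.
  For \<open>\<kappa> = 4\<close> the same two steps, run from \<open>n \<ge> 2100\<close> (where \<open>f\<^sub>n \<ge> 27\<close> and the
  concavity defect of \<open>f\<close> is below \<open>1/200000\<close>) and starting from the trivial lower bound
  \<open>b \<ge> 0\<close>, reach the stated constants after twenty-one rounds.\<close>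

definition dPI_root :: "real \<Rightarrow> nat \<Rightarrow> real" where
  "dPI_root \<kappa> n = (\<kappa> + sqrt (\<kappa>\<^sup>2 + 12 * real n)) / 6"

lemma dPI_root_pos:
  assumes "1 \<le> n"
  shows "0 < dPI_root \<kappa> n" "\<kappa> < 3 * dPI_root \<kappa> n"
proof -
  have "sqrt (\<kappa>\<^sup>2) < sqrt (\<kappa>\<^sup>2 + 12 * real n)"
    using assms by (subst real_sqrt_less_iff) simp
  then have "\<bar>\<kappa>\<bar> < sqrt (\<kappa>\<^sup>2 + 12 * real n)"
    by simp
  then show "0 < dPI_root \<kappa> n" "\<kappa> < 3 * dPI_root \<kappa> n"
    unfolding dPI_root_def using abs_ge_self[of \<kappa>] abs_ge_minus_self[of \<kappa>]
    by (simp_all add: field_simps)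
qed

lemma dPI_root_eq: "real n = dPI_root \<kappa> n * (3 * dPI_root \<kappa> n - \<kappa>)"
proof -
  define s where "s = sqrt (\<kappa>\<^sup>2 + 12 * real n)"
  have "s\<^sup>2 = \<kappa>\<^sup>2 + 12 * real n"
    unfolding s_def by simp
  moreover have "dPI_root \<kappa> n * (3 * dPI_root \<kappa> n - \<kappa>) = (s\<^sup>2 - \<kappa>\<^sup>2) / 12"
    unfolding dPI_root_def s_def[symmetric] by (simp add: field_simps power2_eq_square)
  ultimately show ?thesis
    by simp
qed

lemma dPI_root_nonneg: "0 \<le> dPI_root \<kappa> n"
proof -
  have "\<bar>\<kappa>\<bar> \<le> sqrt (\<kappa>\<^sup>2 + 12 * real n)"
    by (simp add: real_le_rsqrt)
  then show ?thesis
    unfolding dPI_root_def by simp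
qed

lemma dPI_root_mono: "m \<le> n \<Longrightarrow> dPI_root \<kappa> m \<le> dPI_root \<kappa> n"
  unfolding dPI_root_def by (simp add: divide_right_mono)

lemma dPI_root_Suc_le: "dPI_root \<kappa> (Suc n) \<le> dPI_root \<kappa> n + 1"
proof -
  define a where "a = \<kappa>\<^sup>2 + 12 * real n"
  have "0 \<le> a"
    unfolding a_def by simp
  then have "sqrt (a + 12) \<le> sqrt a + 6"
    by (intro real_le_lsqrt) (auto simp: power2_eq_square algebra_simps)
  moreover have "\<kappa>\<^sup>2 + 12 * real (Suc n) = a + 12"
    unfolding a_def by simp
  ultimately show ?thesis
    unfolding dPI_root_def a_def[symmetric] by (simp add: field_simps)
qed

lemma sqrt_add_le_sqrt_double:
  fixes x y :: real
  assumes "0 \<le> x" "0 \<le> y"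
  shows "sqrt x + sqrt y \<le> sqrt (2 * (x + y))"
proof (rule real_le_rsqrt)
  have "0 \<le> (sqrt x - sqrt y)\<^sup>2"
    by simp
  then show "(sqrt x + sqrt y)\<^sup>2 \<le> 2 * (x + y)"
    using assms by (simp add: power2_eq_square algebra_simps)
qed

lemma dPI_root_concave:
  assumes "1 \<le> n"
  shows "dPI_root \<kappa> (n - 1) + dPI_root \<kappa> (n + 1) \<le> 2 * dPI_root \<kappa> n"
proof -
  define a where "a = \<kappa>\<^sup>2 + 12 * real n"
  have "12 \<le> a"
    using assms unfolding a_def by (simp add: add_increasing)
  then have "sqrt (a - 12) + sqrt (a + 12) \<le> sqrt (2 * ((a - 12) + (a + 12)))"
    by (intro sqrt_add_le_sqrt_double) auto
  also have "sqrt (2 * ((a - 12) + (a + 12))) = 2 * sqrt a"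
    by (simp add: real_sqrt_mult)
  moreover have "\<kappa>\<^sup>2 + 12 * real (n - 1) = a - 12" "\<kappa>\<^sup>2 + 12 * real (n + 1) = a + 12"
    using assms unfolding a_def by (simp_all add: of_nat_diff)
  ultimately show ?thesis
    unfolding dPI_root_def a_def[symmetric] by (simp add: field_simps)
qed

lemma dPI_root_concave_defect_le_1:
  assumes "1 \<le> n"
  shows "2 * dPI_root \<kappa> n - 1 \<le> dPI_root \<kappa> (n - 1) + dPI_root \<kappa> (n + 1)"
  using dPI_root_Suc_le[of \<kappa> "n - 1"] dPI_root_mono[of n "n + 1" \<kappa>] assms by simp

lemma dPI_root_at_top: "filterlim (dPI_root \<kappa>) at_top at_top"
  unfolding dPI_root_def by real_asymp

lemma eventually_le_dPI_root_mult:
  assumes "0 < c"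
  shows "eventually (\<lambda>n. K \<le> dPI_root \<kappa> n * c) sequentially"
proof -
  have "eventually (\<lambda>n. K / c \<le> dPI_root \<kappa> n) sequentially"
    using dPI_root_at_top unfolding filterlim_at_top by blast
  then show ?thesis
    by eventually_elim (use assms in \<open>simp add: pos_divide_le_eq\<close>)
qed

lemma dPI_root_sqrt_form:
  "dPI_root \<kappa> n = (\<kappa> + sqrt (\<kappa>\<^sup>2 + 36 * (sqrt (real n) / sqrt 3)\<^sup>2)) / 6"
  unfolding dPI_root_def by (simp add: power_divide)

lemma dPI_root_asymp: "(\<lambda>n. dPI_root \<kappa> n / (sqrt (real n) / sqrt 3)) \<longlonglongrightarrow> 1"
proof -
  have "((\<lambda>x. (\<kappa> + sqrt (\<kappa>\<^sup>2 + 36 * x\<^sup>2)) / 6 / x) \<longlongrightarrow> 1) at_top"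
    by real_asymp
  moreover have "filterlim (\<lambda>n. sqrt (real n) / sqrt 3) at_top sequentially"
    by real_asymp
  ultimately show ?thesis
    unfolding dPI_root_sqrt_form by (rule filterlim_compose)
qed

lemma dPI_pos_solution_pos: "dPI_pos_solution \<kappa> b \<Longrightarrow> 1 \<le> n \<Longrightarrow> 0 < b n"
  unfolding dPI_pos_solution_def by auto

lemma dPI_pos_solution_nonneg:
  assumes "dPI_pos_solution \<kappa> b"
  shows "0 \<le> b n"
proof (cases "n = 0")
  case True
  then show ?thesis
    using assms by (simp add: dPI_pos_solution_def)
next
  case False
  then show ?thesis
    using dPI_pos_solution_pos[OF assms, of n] by simp
qed

lemma dPI_pos_solution_neighbours:
  "dPI_pos_solution \<kappa> b \<Longrightarrow> 1 \<le> n \<Longrightarrow> b (n - 1) + b (n + 1) = real n / b n - b n + \<kappa>"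
  unfolding dPI_pos_solution_def by auto

text \<open>With \<open>n = f (3 f - \<kappa>)\<close>, the map \<open>x \<mapsto> n/x - x + \<kappa>\<close> is decreasing and takes the value
  \<open>(3 f - \<kappa>)/T - T f + \<kappa>\<close> at \<open>x = T f\<close>; the last hypothesis of either lemma says that this
  value lies on the right side of the bound on the neighbours.\<close>

lemma scaled_le_of_neighbour_sum_le:
  fixes f x \<kappa> U T :: real
  assumes "0 < x" "0 < f" "\<kappa> < 3 * f" "f * (3 * f - \<kappa>) / x - x + \<kappa> \<le> 2 * U * f"
    and "0 < T" "\<kappa> * (1 - T) \<le> f * (3 - T\<^sup>2 - 2 * U * T)"
  shows "T * f \<le> x"
proof (rule ccontr)
  assume "\<not> T * f \<le> x"
  then have "f * (3 * f - \<kappa>) / (T * f) < f * (3 * f - \<kappa>) / x"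
    using assms by (intro divide_strict_left_mono) auto
  also have "f * (3 * f - \<kappa>) / (T * f) = (3 * f - \<kappa>) / T"
    using assms by simp
  finally have "(3 * f - \<kappa>) / T - T * f + \<kappa> < 2 * U * f"
    using assms \<open>\<not> T * f \<le> x\<close> by simp
  then have "T * ((3 * f - \<kappa>) / T - T * f + \<kappa>) < T * (2 * U * f)"
    using assms by (intro mult_strict_left_mono) auto
  also have "T * ((3 * f - \<kappa>) / T - T * f + \<kappa>) = 3 * f - \<kappa> - T\<^sup>2 * f + T * \<kappa>"
    using assms by (simp add: field_simps power2_eq_square)
  finally show False
    using assms by (simp add: algebra_simps power2_eq_square)
qed

lemma le_scaled_of_neighbour_sum_ge:
  fixes f x \<kappa> L E T :: real
  assumes "0 < x" "0 < f" "\<kappa> < 3 * f" "2 * L * f - E \<le> f * (3 * f - \<kappa>) / x - x + \<kappa>"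
    and "0 < T" "\<kappa> * (T - 1) + T * E \<le> f * (T\<^sup>2 + 2 * L * T - 3)"
  shows "x \<le> T * f"
proof (rule ccontr)
  assume "\<not> x \<le> T * f"
  then have "f * (3 * f - \<kappa>) / x < f * (3 * f - \<kappa>) / (T * f)"
    using assms by (intro divide_strict_left_mono) auto
  also have "f * (3 * f - \<kappa>) / (T * f) = (3 * f - \<kappa>) / T"
    using assms by simp
  finally have "2 * L * f - E < (3 * f - \<kappa>) / T - T * f + \<kappa>"
    using assms \<open>\<not> x \<le> T * f\<close> by simp
  then have "T * (2 * L * f - E) < T * ((3 * f - \<kappa>) / T - T * f + \<kappa>)"
    using assms by (intro mult_strict_left_mono) auto
  also have "T * ((3 * f - \<kappa>) / T - T * f + \<kappa>) = 3 * f - \<kappa> - T\<^sup>2 * f + T * \<kappa>"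
    using assms by (simp add: field_simps power2_eq_square)
  finally show False
    using assms by (simp add: algebra_simps power2_eq_square)
qed

lemma dPI_lower_bound_step:
  assumes b: "dPI_pos_solution \<kappa> b" and n: "1 \<le> n" and "0 \<le> U" "0 < T"
    and "b (n - 1) \<le> U * dPI_root \<kappa> (n - 1)" "b (n + 1) \<le> U * dPI_root \<kappa> (n + 1)"
    and "\<kappa> * (1 - T) \<le> dPI_root \<kappa> n * (3 - T\<^sup>2 - 2 * U * T)"
  shows "T * dPI_root \<kappa> n \<le> b n"
proof (rule scaled_le_of_neighbour_sum_le)
  have "b (n - 1) + b (n + 1) \<le> U * (dPI_root \<kappa> (n - 1) + dPI_root \<kappa> (n + 1))"
    using assms by (simp add: algebra_simps)
  also have "\<dots> \<le> U * (2 * dPI_root \<kappa> n)"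
    using dPI_root_concave[OF n] assms by (intro mult_left_mono) auto
  finally show "dPI_root \<kappa> n * (3 * dPI_root \<kappa> n - \<kappa>) / b n - b n + \<kappa> \<le> 2 * U * dPI_root \<kappa> n"
    unfolding dPI_root_eq[symmetric] using dPI_pos_solution_neighbours[OF b n] by simp
qed (use assms dPI_pos_solution_pos dPI_root_pos in auto)

lemma dPI_upper_bound_step:
  assumes b: "dPI_pos_solution \<kappa> b" and n: "1 \<le> n" and "0 \<le> L" "0 < T"
    and "L * dPI_root \<kappa> (n - 1) \<le> b (n - 1)" "L * dPI_root \<kappa> (n + 1) \<le> b (n + 1)"
    and defect: "2 * dPI_root \<kappa> n - \<delta> \<le> dPI_root \<kappa> (n - 1) + dPI_root \<kappa> (n + 1)"
    and "\<kappa> * (T - 1) + T * (L * \<delta>) \<le> dPI_root \<kappa> n * (T\<^sup>2 + 2 * L * T - 3)"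
  shows "b n \<le> T * dPI_root \<kappa> n"
proof (rule le_scaled_of_neighbour_sum_ge)
  have "L * (2 * dPI_root \<kappa> n - \<delta>) \<le> L * (dPI_root \<kappa> (n - 1) + dPI_root \<kappa> (n + 1))"
    using defect assms by (intro mult_left_mono) auto
  also have "\<dots> \<le> b (n - 1) + b (n + 1)"
    using assms by (simp add: algebra_simps)
  finally show "2 * L * dPI_root \<kappa> n - L * \<delta> \<le> dPI_root \<kappa> n * (3 * dPI_root \<kappa> n - \<kappa>) / b n - b n + \<kappa>"
    unfolding dPI_root_eq[symmetric] using dPI_pos_solution_neighbours[OF b n] by (simp add: algebra_simps)
qed (use assms dPI_pos_solution_pos dPI_root_pos in auto)

lemma eventually_dPI_lower_bound:
  assumes b: "dPI_pos_solution \<kappa> b" and "0 \<le> U" "0 < T" "T\<^sup>2 + 2 * U * T < 3"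
    and upper: "eventually (\<lambda>n. b n \<le> U * dPI_root \<kappa> n) sequentially"
  shows "eventually (\<lambda>n. T * dPI_root \<kappa> n \<le> b n) sequentially"
proof -
  obtain M where M: "\<And>m. M \<le> m \<Longrightarrow> b m \<le> U * dPI_root \<kappa> m"
    using upper unfolding eventually_sequentially by blast
  obtain N where N: "\<And>n. N \<le> n \<Longrightarrow> \<kappa> * (1 - T) \<le> dPI_root \<kappa> n * (3 - T\<^sup>2 - 2 * U * T)"
    using eventually_le_dPI_root_mult[of "3 - T\<^sup>2 - 2 * U * T"] assms
    unfolding eventually_sequentially by fastforce
  show ?thesis
    unfolding eventually_sequentially
    using dPI_lower_bound_step[OF b _ \<open>0 \<le> U\<close> \<open>0 < T\<close>] M N by (intro exI[of _ "M + N + 1"]) auto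
qed

lemma eventually_dPI_upper_bound:
  assumes b: "dPI_pos_solution \<kappa> b" and "0 \<le> L" "0 < T" "3 < T\<^sup>2 + 2 * L * T"
    and lower: "eventually (\<lambda>n. L * dPI_root \<kappa> n \<le> b n) sequentially"
  shows "eventually (\<lambda>n. b n \<le> T * dPI_root \<kappa> n) sequentially"
proof -
  obtain M where M: "\<And>m. M \<le> m \<Longrightarrow> L * dPI_root \<kappa> m \<le> b m"
    using lower unfolding eventually_sequentially by blast
  obtain N where N: "\<And>n. N \<le> n \<Longrightarrow> \<kappa> * (T - 1) + T * L \<le> dPI_root \<kappa> n * (T\<^sup>2 + 2 * L * T - 3)"
    using eventually_le_dPI_root_mult[of "T\<^sup>2 + 2 * L * T - 3"] assms
    unfolding eventually_sequentially by fastforce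
  show ?thesis
    unfolding eventually_sequentially
    using dPI_upper_bound_step[OF b _ \<open>0 \<le> L\<close> \<open>0 < T\<close> _ _ dPI_root_concave_defect_le_1] M N
    by (intro exI[of _ "M + N + 1"]) auto
qed

lemma obtain_at_right_0:
  fixes P :: "real \<Rightarrow> bool"
  assumes "eventually P (at_right 0)"
  obtains d where "0 < d" "P d"
proof -
  have "eventually (\<lambda>d. 0 < d \<and> P d) (at_right 0)"
    using eventually_at_right_less assms by (rule eventually_conj)
  then show ?thesis
    using eventually_happens'[OF trivial_limit_at_right_real] that by blast
qed

lemma bootstrap_constants_eq_1:
  fixes l u :: real
  assumes "0 \<le> l" "l \<le> u"
    and lower: "\<And>U T. u < U \<Longrightarrow> 0 < T \<Longrightarrow> T\<^sup>2 + 2 * U * T < 3 \<Longrightarrow> T \<le> l"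
    and upper: "\<And>L T. 0 \<le> L \<Longrightarrow> L < l \<Longrightarrow> 0 < T \<Longrightarrow> 3 < T\<^sup>2 + 2 * L * T \<Longrightarrow> u \<le> T"
  shows "l = 1" "u = 1"
proof -
  have lower_eq: "3 \<le> l\<^sup>2 + 2 * u * l"
  proof (rule ccontr)
    assume "\<not> 3 \<le> l\<^sup>2 + 2 * u * l"
    moreover have lim: "((\<lambda>d. (l + d)\<^sup>2 + 2 * (u + d) * (l + d)) \<longlongrightarrow> (l + 0)\<^sup>2 + 2 * (u + 0) * (l + 0)) (at_right 0)"
      by (intro tendsto_intros)
    ultimately have "eventually (\<lambda>d. (l + d)\<^sup>2 + 2 * (u + d) * (l + d) < 3) (at_right 0)"
      by (intro order_tendstoD(2)[OF lim]) simp
    then obtain d where "0 < d" "(l + d)\<^sup>2 + 2 * (u + d) * (l + d) < 3"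
      by (rule obtain_at_right_0)
    then have "l + d \<le> l"
      using \<open>0 \<le> l\<close> by (intro lower[of "u + d"]) simp_all
    with \<open>0 < d\<close> show False
      by simp
  qed
  then have "0 < l"
    using assms by (cases "l = 0") auto
  have upper_eq: "u\<^sup>2 + 2 * l * u \<le> 3"
  proof (rule ccontr)
    assume "\<not> u\<^sup>2 + 2 * l * u \<le> 3"
    moreover have lim: "((\<lambda>d. (u - d)\<^sup>2 + 2 * (l - d) * (u - d)) \<longlongrightarrow> (u - 0)\<^sup>2 + 2 * (l - 0) * (u - 0)) (at_right 0)"
      by (intro tendsto_intros)
    ultimately have "eventually (\<lambda>d. 3 < (u - d)\<^sup>2 + 2 * (l - d) * (u - d)) (at_right 0)"
      by (intro order_tendstoD(1)[OF lim]) simp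
    moreover have "eventually (\<lambda>d. d < l) (at_right 0)"
      using tendsto_ident_at \<open>0 < l\<close> by (rule order_tendstoD(2))
    ultimately have "eventually (\<lambda>d. 3 < (u - d)\<^sup>2 + 2 * (l - d) * (u - d) \<and> d < l) (at_right 0)"
      by (rule eventually_conj)
    then obtain d where "0 < d" "d < l" "3 < (u - d)\<^sup>2 + 2 * (l - d) * (u - d)"
      by (rule obtain_at_right_0) blast
    then have "u \<le> u - d"
      using \<open>l \<le> u\<close> by (intro upper[of "l - d"]) simp_all
    with \<open>0 < d\<close> show False
      by simp
  qed
  have "u\<^sup>2 \<le> l\<^sup>2"
    using lower_eq upper_eq mult.commute[of u l] by linarith
  then have "l = u"
    using \<open>0 \<le> l\<close> \<open>l \<le> u\<close> power2_le_imp_le[of u l] by simp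
  then have "u\<^sup>2 = 1"
    using lower_eq upper_eq mult.commute[of u l] by (simp add: power2_eq_square)
  then show "u = 1"
    using \<open>0 \<le> l\<close> \<open>l \<le> u\<close> by (simp add: power2_eq_1_iff)
  with \<open>l = u\<close> show "l = 1"
    by simp
qed

lemma bootstrap_thresholds:
  fixes up low :: "real \<Rightarrow> bool"
  assumes low_0: "low 0"
    and low_le_up: "\<And>L U. low L \<Longrightarrow> up U \<Longrightarrow> L \<le> U"
    and up_mono: "\<And>U U'. up U \<Longrightarrow> U \<le> U' \<Longrightarrow> up U'"
    and low_mono: "\<And>L L'. low L \<Longrightarrow> L' \<le> L \<Longrightarrow> low L'"
    and up_imp_low: "\<And>U T. up U \<Longrightarrow> 0 < T \<Longrightarrow> T\<^sup>2 + 2 * U * T < 3 \<Longrightarrow> low T"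
    and low_imp_up: "\<And>L T. low L \<Longrightarrow> 0 \<le> L \<Longrightarrow> 0 < T \<Longrightarrow> 3 < T\<^sup>2 + 2 * L * T \<Longrightarrow> up T"
  shows "(\<forall>c>1. up c) \<and> (\<forall>c<1. low c)"
proof -
  define u where "u = Inf {U. up U}"
  define l where "l = Sup {L. low L}"
  have "up 2"
    using low_imp_up[OF low_0] by simp
  then have ne: "{U. up U} \<noteq> {}" "{L. low L} \<noteq> {}"
    using low_0 by auto
  have bdd: "bdd_below {U. up U}" "bdd_above {L. low L}"
    using low_le_up[OF low_0] low_le_up[OF _ \<open>up 2\<close>]
    by (auto intro: bdd_belowI[of _ 0] bdd_aboveI[of _ 2])
  have "0 \<le> l"
    unfolding l_def using low_0 bdd(2) by (intro cSup_upper) auto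
  moreover have "l \<le> u"
    unfolding l_def u_def using ne low_le_up by (intro cInf_greatest cSup_least) auto
  moreover have "T \<le> l" if "u < U" "0 < T" "T\<^sup>2 + 2 * U * T < 3" for U T
  proof -
    obtain U' where "up U'" "U' < U"
      using cInf_lessD[OF ne(1)] \<open>u < U\<close> unfolding u_def by blast
    have "T\<^sup>2 + 2 * U' * T < 3"
      using mult_strict_right_mono[OF \<open>U' < U\<close> \<open>0 < T\<close>] \<open>T\<^sup>2 + 2 * U * T < 3\<close>
      by (simp add: mult.assoc)
    with \<open>up U'\<close> \<open>0 < T\<close> have "low T"
      by (rule up_imp_low)
    then show "T \<le> l"
      unfolding l_def using bdd(2) by (intro cSup_upper) auto
  qed
  moreover have "u \<le> T" if "0 \<le> L" "L < l" "0 < T" "3 < T\<^sup>2 + 2 * L * T" for L T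
  proof -
    obtain L' where "low L'" "L < L'"
      using less_cSup_iff[OF ne(2) bdd(2)] \<open>L < l\<close> unfolding l_def by blast
    have "3 < T\<^sup>2 + 2 * L' * T"
      using mult_strict_right_mono[OF \<open>L < L'\<close> \<open>0 < T\<close>] \<open>3 < T\<^sup>2 + 2 * L * T\<close>
      by (simp add: mult.assoc)
    with \<open>low L'\<close> \<open>0 \<le> L\<close> \<open>L < L'\<close> \<open>0 < T\<close> have "up T"
      by (intro low_imp_up) auto
    then show "u \<le> T"
      unfolding u_def using bdd(1) by (intro cInf_lower) auto
  qed
  ultimately have "l = 1" "u = 1"
    using bootstrap_constants_eq_1 by blast+
  then show ?thesis
    unfolding u_def l_def
    using cInf_lessD[OF ne(1)] less_cSup_iff[OF ne(2) bdd(2)] up_mono low_mono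
    by (metis mem_Collect_eq less_le)
qed

lemma dPI_eventually_ratio_bounds:
  assumes b: "dPI_pos_solution \<kappa> b"
  shows "\<forall>c>1. eventually (\<lambda>n. b n \<le> c * dPI_root \<kappa> n) sequentially"
    and "\<forall>c<1. eventually (\<lambda>n. c * dPI_root \<kappa> n \<le> b n) sequentially"
proof -
  define up where "up U \<longleftrightarrow> eventually (\<lambda>n. b n \<le> U * dPI_root \<kappa> n) sequentially" for U
  define low where "low L \<longleftrightarrow> eventually (\<lambda>n. L * dPI_root \<kappa> n \<le> b n) sequentially" for L
  have low_0: "low 0"
    unfolding low_def using dPI_pos_solution_nonneg[OF b] by simp
  have low_le_up: "L \<le> U" if "low L" "up U" for L U
  proof -
    have "eventually (\<lambda>n. L * dPI_root \<kappa> n \<le> U * dPI_root \<kappa> n \<and> 1 \<le> n) sequentially"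
      using that unfolding low_def up_def
      by (auto elim: eventually_elim2 intro!: eventually_conj eventually_ge_at_top)
    then have "eventually (\<lambda>n. L \<le> U) sequentially"
      by eventually_elim (use dPI_root_pos in auto)
    then show ?thesis
      by simp
  qed
  have up_mono: "up U'" if "up U" "U \<le> U'" for U U'
    using that(1) unfolding up_def
    by eventually_elim (use that(2) dPI_root_nonneg in \<open>meson mult_right_mono order.trans\<close>)
  have low_mono: "low L'" if "low L" "L' \<le> L" for L L'
    using that(1) unfolding low_def
    by eventually_elim (use that(2) dPI_root_nonneg in \<open>meson mult_right_mono order.trans\<close>)
  have up_imp_low: "low T" if "up U" "0 < T" "T\<^sup>2 + 2 * U * T < 3" for U T
    using eventually_dPI_lower_bound[OF b _ that(2,3)] that(1) low_le_up[OF low_0 that(1)]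
    unfolding low_def up_def by blast
  have low_imp_up: "up T" if "low L" "0 \<le> L" "0 < T" "3 < T\<^sup>2 + 2 * L * T" for L T
    using eventually_dPI_upper_bound[OF b that(2-4)] that(1) unfolding low_def up_def by blast
  have "(\<forall>c>1. up c) \<and> (\<forall>c<1. low c)"
    using low_0 low_le_up up_mono low_mono up_imp_low low_imp_up by (rule bootstrap_thresholds)
  then show "\<forall>c>1. eventually (\<lambda>n. b n \<le> c * dPI_root \<kappa> n) sequentially"
    "\<forall>c<1. eventually (\<lambda>n. c * dPI_root \<kappa> n \<le> b n) sequentially"
    unfolding up_def low_def by blast+
qed

lemma dPI_ratio_tendsto:
  assumes b: "dPI_pos_solution \<kappa> b"
  shows "(\<lambda>n. b n / dPI_root \<kappa> n) \<longlonglongrightarrow> 1"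
proof (rule order_tendstoI)
  fix a :: real assume "a < 1"
  then have "eventually (\<lambda>n. (a + 1) / 2 * dPI_root \<kappa> n \<le> b n) sequentially"
    by (intro dPI_eventually_ratio_bounds(2)[OF b, rule_format]) simp
  then have "eventually (\<lambda>n. (a + 1) / 2 * dPI_root \<kappa> n \<le> b n \<and> 1 \<le> n) sequentially"
    by (intro eventually_conj eventually_ge_at_top)
  then show "eventually (\<lambda>n. a < b n / dPI_root \<kappa> n) sequentially"
  proof eventually_elim
    case (elim n)
    then have "(a + 1) / 2 \<le> b n / dPI_root \<kappa> n"
      using dPI_root_pos(1)[of n \<kappa>] by (simp add: pos_le_divide_eq)
    moreover have "a < (a + 1) / 2"
      using \<open>a < 1\<close> by simp
    ultimately show ?case
      by (meson order.strict_trans1 order.strict_trans2)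
  qed
next
  fix a :: real assume "1 < a"
  then have "eventually (\<lambda>n. b n \<le> (a + 1) / 2 * dPI_root \<kappa> n) sequentially"
    by (intro dPI_eventually_ratio_bounds(1)[OF b, rule_format]) simp
  then have "eventually (\<lambda>n. b n \<le> (a + 1) / 2 * dPI_root \<kappa> n \<and> 1 \<le> n) sequentially"
    by (intro eventually_conj eventually_ge_at_top)
  then show "eventually (\<lambda>n. b n / dPI_root \<kappa> n < a) sequentially"
  proof eventually_elim
    case (elim n)
    then have "b n / dPI_root \<kappa> n \<le> (a + 1) / 2"
      using dPI_root_pos(1)[of n \<kappa>] by (simp add: pos_divide_le_eq)
    moreover have "(a + 1) / 2 < a"
      using \<open>1 < a\<close> by simp
    ultimately show ?case
      by (meson order.strict_trans1 order.strict_trans2)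
  qed
qed

lemma dPI_sqrt_ratio_tendsto:
  assumes b: "dPI_pos_solution \<kappa> b"
  shows "(\<lambda>n. b n / (sqrt (real n) / sqrt 3)) \<longlonglongrightarrow> 1"
proof -
  have "(\<lambda>n. b n / dPI_root \<kappa> n * (dPI_root \<kappa> n / (sqrt (real n) / sqrt 3))) \<longlonglongrightarrow> 1 * 1"
    using dPI_ratio_tendsto[OF b] dPI_root_asymp by (rule tendsto_mult)
  then have "(\<lambda>n. b n / dPI_root \<kappa> n * (dPI_root \<kappa> n / (sqrt (real n) / sqrt 3))) \<longlonglongrightarrow> 1"
    by (simp only: mult_1)
  moreover have "eventually (\<lambda>n. b n / dPI_root \<kappa> n * (dPI_root \<kappa> n / (sqrt (real n) / sqrt 3))
      = b n / (sqrt (real n) / sqrt 3)) sequentially"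
    using eventually_ge_at_top[of 1]
  proof eventually_elim
    case (elim n)
    then show ?case
      using dPI_root_pos(1)[of n \<kappa>] by simp
  qed
  ultimately show ?thesis
    by (rule Lim_transform_eventually)
qed

lemma dPI_eventually_sqrt_bounds:
  assumes b: "dPI_pos_solution \<kappa> b" and "cm < 1" "1 < cp"
  shows "\<exists>N. \<forall>n\<ge>N. cm * sqrt (real n) / sqrt 3 \<le> b n \<and> b n \<le> cp * sqrt (real n) / sqrt 3"
proof -
  have "eventually (\<lambda>n. cm < b n / (sqrt (real n) / sqrt 3) \<and> b n / (sqrt (real n) / sqrt 3) < cp
      \<and> 1 \<le> n) sequentially"
    using dPI_sqrt_ratio_tendsto[OF b] assms(2,3)
    by (intro eventually_conj order_tendstoD eventually_ge_at_top)
  then have "eventually (\<lambda>n. cm * sqrt (real n) / sqrt 3 \<le> b n \<and> b n \<le> cp * sqrt (real n) / sqrt 3)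
      sequentially"
    by eventually_elim (auto simp: field_simps)
  then show ?thesis
    unfolding eventually_sequentially .
qed

lemma dPI_root_4_ge_27: "2100 \<le> n \<Longrightarrow> 27 \<le> dPI_root 4 n"
proof -
  assume "2100 \<le> n"
  then have "158 \<le> sqrt (4\<^sup>2 + 12 * real n)"
    by (intro real_le_rsqrt) simp
  then show ?thesis
    unfolding dPI_root_def by simp
qed

lemma sqrt_concave_defect:
  fixes a :: real
  assumes "25216 \<le> a"
  shows "2 * sqrt a - 3 / 100000 \<le> sqrt (a - 12) + sqrt (a + 12)"
proof -
  define p q r where "p = sqrt (a - 12)" and "q = sqrt (a + 12)" and "r = sqrt a"
  have "p\<^sup>2 = a - 12" "q\<^sup>2 = a + 12" "r\<^sup>2 = a" "0 \<le> p" "0 \<le> q"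
    unfolding p_def q_def r_def using assms by simp_all
  have "158 \<le> r"
    unfolding r_def using assms by (intro real_le_rsqrt) simp
  have "a - 1 / 200 \<le> sqrt ((a - 12) * (a + 12))"
  proof (rule real_le_rsqrt)
    have "(a - 1 / 200)\<^sup>2 = a * a - a / 100 + 1 / 40000" "(a - 12) * (a + 12) = a * a - 144"
      by (simp_all add: power2_eq_square field_simps)
    then show "(a - 1 / 200)\<^sup>2 \<le> (a - 12) * (a + 12)"
      using assms by linarith
  qed
  also have "\<dots> = p * q"
    unfolding p_def q_def by (simp add: real_sqrt_mult)
  finally have "4 * a - 1 / 100 \<le> (p + q)\<^sup>2"
    using \<open>p\<^sup>2 = a - 12\<close> \<open>q\<^sup>2 = a + 12\<close> by (simp add: power2_eq_square algebra_simps)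
  moreover have "(2 * r - 3 / 100000)\<^sup>2 = 4 * r\<^sup>2 - 12 / 100000 * r + 9 / 10000000000"
    by (simp add: power2_eq_square field_simps)
  ultimately have "(2 * r - 3 / 100000)\<^sup>2 \<le> (p + q)\<^sup>2"
    using \<open>r\<^sup>2 = a\<close> \<open>158 \<le> r\<close> by linarith
  then show ?thesis
    unfolding p_def[symmetric] q_def[symmetric] r_def[symmetric]
    by (rule power2_le_imp_le) (use \<open>0 \<le> p\<close> \<open>0 \<le> q\<close> in simp)
qed

lemma dPI_root_4_concave_defect:
  assumes "2100 \<le> n"
  shows "2 * dPI_root 4 n - 1 / 200000 \<le> dPI_root 4 (n - 1) + dPI_root 4 (n + 1)"
proof -
  define a :: real where "a = 4\<^sup>2 + 12 * real n"
  have "4\<^sup>2 + 12 * real (n - 1) = a - 12" "4\<^sup>2 + 12 * real (n + 1) = a + 12"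
    using assms unfolding a_def by (simp_all add: of_nat_diff)
  moreover have "2 * sqrt a - 3 / 100000 \<le> sqrt (a - 12) + sqrt (a + 12)"
    using assms unfolding a_def by (intro sqrt_concave_defect) simp
  ultimately show ?thesis
    unfolding dPI_root_def a_def[symmetric] by (simp add: field_simps)
qed

lemma dPI4_lower_step:
  assumes b: "dPI_pos_solution 4 b" and "\<forall>m\<ge>M. b m \<le> U * dPI_root 4 m"
    and "2099 \<le> M" "M + 1 \<le> M'" "0 \<le> U" "0 < T" "T \<le> 1"
    and side: "4 * (1 - T) \<le> 27 * (3 - T\<^sup>2 - 2 * U * T)"
  shows "\<forall>n\<ge>M'. T * dPI_root 4 n \<le> b n"
proof (intro allI impI)
  fix n assume "M' \<le> n"
  have "0 \<le> 27 * (3 - T\<^sup>2 - 2 * U * T)"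
    using \<open>T \<le> 1\<close> by (intro order.trans[OF _ side]) simp
  then have "0 \<le> 3 - T\<^sup>2 - 2 * U * T"
    by simp
  then have "27 * (3 - T\<^sup>2 - 2 * U * T) \<le> dPI_root 4 n * (3 - T\<^sup>2 - 2 * U * T)"
    using dPI_root_4_ge_27[of n] \<open>M' \<le> n\<close> assms by (intro mult_right_mono) auto
  then show "T * dPI_root 4 n \<le> b n"
    using assms \<open>M' \<le> n\<close> by (intro dPI_lower_bound_step[OF b, of n U]) auto
qed

lemma dPI4_upper_step:
  assumes b: "dPI_pos_solution 4 b" and "\<forall>m\<ge>M. L * dPI_root 4 m \<le> b m"
    and "2099 \<le> M" "M + 1 \<le> M'" "0 \<le> L" "1 \<le> T"
    and side: "4 * (T - 1) + T * L / 200000 \<le> 27 * (T\<^sup>2 + 2 * L * T - 3)"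
  shows "\<forall>n\<ge>M'. b n \<le> T * dPI_root 4 n"
proof (intro allI impI)
  fix n assume "M' \<le> n"
  have "0 \<le> 4 * (T - 1) + T * L / 200000"
    using \<open>0 \<le> L\<close> \<open>1 \<le> T\<close> by simp
  then have "0 \<le> 27 * (T\<^sup>2 + 2 * L * T - 3)"
    using side by (rule order.trans)
  then have "0 \<le> T\<^sup>2 + 2 * L * T - 3"
    by simp
  then have "27 * (T\<^sup>2 + 2 * L * T - 3) \<le> dPI_root 4 n * (T\<^sup>2 + 2 * L * T - 3)"
    using dPI_root_4_ge_27[of n] \<open>M' \<le> n\<close> assms by (intro mult_right_mono) auto
  then show "b n \<le> T * dPI_root 4 n"
    using assms \<open>M' \<le> n\<close> dPI_root_4_concave_defect[of n]
    by (intro dPI_upper_bound_step[OF b, of n L T "1 / 200000"]) auto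
qed

text \<open>Starting from \<open>b \<ge> 0\<close>, each constant is the extremal \<open>T\<close> allowed by the side
  condition of the step lemma, given the previous constant, rounded in the safe direction.\<close>

lemma dPI4_ratio_bounds:
  assumes b: "dPI_pos_solution 4 b"
  shows "\<forall>n\<ge>2120. 0.9999975323 * dPI_root 4 n \<le> b n \<and> b n \<le> 1.0000013295 * dPI_root 4 n"
proof -
  note lower = dPI4_lower_step[OF b] and upper = dPI4_upper_step[OF b]
  have "\<forall>n\<ge>2099. 0 * dPI_root 4 n \<le> b n"
    using dPI_pos_solution_nonneg[OF b] by simp
  then have "\<forall>n\<ge>2100. b n \<le> 1.7644405494 * dPI_root 4 n"
    by (rule upper) (simp_all add: power2_eq_square)
  then have "\<forall>n\<ge>2101. 0.6990248011 * dPI_root 4 n \<le> b n"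
    by (rule lower) (simp_all add: power2_eq_square)
  then have "\<forall>n\<ge>2102. b n \<le> 1.1757200968 * dPI_root 4 n"
    by (rule upper) (simp_all add: power2_eq_square)
  then have "\<forall>n\<ge>2103. 0.9146564870 * dPI_root 4 n \<le> b n"
    by (rule lower) (simp_all add: power2_eq_square)
  then have "\<forall>n\<ge>2104. b n \<le> 1.0457979364 * dPI_root 4 n"
    by (rule upper) (simp_all add: power2_eq_square)
  then have "\<forall>n\<ge>2105. 0.9766341941 * dPI_root 4 n \<le> b n"
    by (rule lower) (simp_all add: power2_eq_square)
  then have "\<forall>n\<ge>2106. b n \<le> 1.0122419078 * dPI_root 4 n"
    by (rule upper) (simp_all add: power2_eq_square)
  then have "\<forall>n\<ge>2107. 0.9936734474 * dPI_root 4 n \<le> b n"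
    by (rule lower) (simp_all add: power2_eq_square)
  then have "\<forall>n\<ge>2108. b n \<le> 1.0032929909 * dPI_root 4 n"
    by (rule upper) (simp_all add: power2_eq_square)
  then have "\<forall>n\<ge>2109. 0.9982923404 * dPI_root 4 n \<le> b n"
    by (rule lower) (simp_all add: power2_eq_square)
  then have "\<forall>n\<ge>2110. b n \<le> 1.0008872999 * dPI_root 4 n"
    by (rule upper) (simp_all add: power2_eq_square)
  then have "\<forall>n\<ge>2111. 0.9995394436 * dPI_root 4 n \<le> b n"
    by (rule lower) (simp_all add: power2_eq_square)
  then have "\<forall>n\<ge>2112. b n \<le> 1.0002392256 * dPI_root 4 n"
    by (rule upper) (simp_all add: power2_eq_square)
  then have "\<forall>n\<ge>2113. 0.9998757980 * dPI_root 4 n \<le> b n"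
    by (rule lower) (simp_all add: power2_eq_square)
  then have "\<forall>n\<ge>2114. b n \<le> 1.0000645408 * dPI_root 4 n"
    by (rule upper) (simp_all add: power2_eq_square)
  then have "\<forall>n\<ge>2115. 0.9999664891 * dPI_root 4 n \<le> b n"
    by (rule lower) (simp_all add: power2_eq_square)
  then have "\<forall>n\<ge>2116. b n \<le> 1.0000174483 * dPI_root 4 n"
    by (rule upper) (simp_all add: power2_eq_square)
  then have "\<forall>n\<ge>2117. 0.9999909402 * dPI_root 4 n \<le> b n"
    by (rule lower) (simp_all add: power2_eq_square)
  then have "\<forall>n\<ge>2118. b n \<le> 1.0000047524 * dPI_root 4 n"
    by (rule upper) (simp_all add: power2_eq_square)
  then have low: "\<forall>n\<ge>2119. 0.9999975323 * dPI_root 4 n \<le> b n"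
    by (rule lower) (simp_all add: power2_eq_square)
  then have "\<forall>n\<ge>2120. b n \<le> 1.0000013295 * dPI_root 4 n"
    by (rule upper) (simp_all add: power2_eq_square)
  with low show ?thesis
    by simp
qed

lemma dPI4_sqrt_bounds:
  assumes b: "dPI_pos_solution 4 b" and "2187 \<le> n"
  shows "0.987 * sqrt (real n) / sqrt 3 \<le> b n \<and> b n \<le> 1.025 * sqrt (real n) / sqrt 3"
proof -
  define s where "s = sqrt (real n) / sqrt 3"
  have "27 \<le> s"
    unfolding s_def real_sqrt_divide[symmetric] using assms by (intro real_le_rsqrt) simp
  have root: "dPI_root 4 n = (4 + sqrt (16 + 36 * s\<^sup>2)) / 6"
    unfolding s_def dPI_root_sqrt_form by simp
  have "6 * s \<le> sqrt (16 + 36 * s\<^sup>2)"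
    by (intro real_le_rsqrt) (simp add: power2_eq_square)
  then have "s \<le> dPI_root 4 n"
    unfolding root by simp
  moreover have "sqrt (16 + 36 * s\<^sup>2) \<le> 6 * s + 4 / 81"
    using \<open>27 \<le> s\<close> by (intro real_le_lsqrt) (auto simp: power2_eq_square algebra_simps)
  then have "dPI_root 4 n \<le> s + 2 / 3 + 2 / 243"
    unfolding root by simp
  moreover have "0.9999975323 * dPI_root 4 n \<le> b n" "b n \<le> 1.0000013295 * dPI_root 4 n"
    using dPI4_ratio_bounds[OF b] \<open>2187 \<le> n\<close> by simp_all
  ultimately have "0.987 * s \<le> b n" "b n \<le> 1.025 * s"
    using \<open>27 \<le> s\<close> by simp_all
  then show ?thesis
    unfolding s_def by simp
qed

theorem mainTheorem10:
  fixes \<kappa> :: real and b :: "nat \<Rightarrow> real"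
  assumes "dPI_pos_solution \<kappa> b"
  shows "(\<forall>cm cp :: real. cm < 1 \<longrightarrow> cp > 1 \<longrightarrow>
            (\<exists>N::nat. \<forall>n\<ge>N. cm * sqrt (real n) / sqrt 3 \<le> b n \<and> b n \<le> cp * sqrt (real n) / sqrt 3))
       \<and> (\<kappa> = 4 \<longrightarrow> (\<forall>n\<ge>(2187::nat).
            0.987 * sqrt (real n) / sqrt 3 \<le> b n \<and> b n \<le> 1.025 * sqrt (real n) / sqrt 3))"
  using dPI_eventually_sqrt_bounds[OF assms] dPI4_sqrt_bounds assms by blast

end
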